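(* Let $A$ be a non-zero linear endomorphism of $\mathbb{E}^n$ and $\mathbf{b}$ an orthonormal basis. (a) If $n$ is odd, the forms $\mathbf{A}^r_{kl}$ ($1\le k<l\le n$) have at least one common non-zero zero. (b) The non-zero linear subspaces $W\subseteq\mathbb{E}^n$ that are maximal (under inclusion) among subspaces on which every $\mathbf{A}^r_{kl}$ vanishes identically are exactly the eigenspaces of $A$ for its real eigenvalues; in particular the dimension of such a maximal common zero-valued subspace equals the geometric multiplicity of the corresponding eigenvalue of $A$.
   Context: $\mathbb{E}^n$ is $\mathbb{R}^n$ with the standard inner product. For an orthonormal basis $\mathbf{b}=\{b_1,\dots,b_n\}$ and $1\le k<l\le n$, $R_{kl}$ is the linear map with $R_{kl}(b_k)=b_l$, $R_{kl}(b_l)=-b_k$, $R_{kl}(b_m)=0$ for $m\ne k,l$. The rotation forms of $A$ are $\mathbf{A}^r_{kl}(u):=A(u)\cdot R_{kl}(u)$. *)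

theory Defs
  imports "HOL-Analysis.Analysis"
begin

text \<open>E^n is modelled by an arbitrary Euclidean space 'a with n = DIM('a).
  An orthonormal basis b_1..b_n is modelled as b :: nat => 'a on indices 0..n-1.\<close>

definition orthonormal_basis :: "(nat \<Rightarrow> 'a::euclidean_space) \<Rightarrow> bool" where
  "orthonormal_basis b \<longleftrightarrow>
     (\<forall>i<DIM('a). \<forall>j<DIM('a). b i \<bullet> b j = (if i = j then 1 else 0))"

definition rot :: "(nat \<Rightarrow> 'a::euclidean_space) \<Rightarrow> nat \<Rightarrow> nat \<Rightarrow> 'a \<Rightarrow> 'a" where
  "rot b k l u = (u \<bullet> b k) *\<^sub>R b l - (u \<bullet> b l) *\<^sub>R b k"

definition rotation_form ::
  "('a::euclidean_space \<Rightarrow> 'a) \<Rightarrow> (nat \<Rightarrow> 'a) \<Rightarrow> nat \<Rightarrow> nat \<Rightarrow> 'a \<Rightarrow> real" where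
  "rotation_form A b k l u = A u \<bullet> rot b k l u"

definition common_zero_subspace ::
  "('a::euclidean_space \<Rightarrow> 'a) \<Rightarrow> (nat \<Rightarrow> 'a) \<Rightarrow> 'a set \<Rightarrow> bool" where
  "common_zero_subspace A b W \<longleftrightarrow> subspace W \<and>
     (\<forall>u\<in>W. \<forall>k l. k < l \<and> l < DIM('a) \<longrightarrow> rotation_form A b k l u = 0)"

definition maximal_common_zero_subspace ::
  "('a::euclidean_space \<Rightarrow> 'a) \<Rightarrow> (nat \<Rightarrow> 'a) \<Rightarrow> 'a set \<Rightarrow> bool" where
  "maximal_common_zero_subspace A b W \<longleftrightarrow> common_zero_subspace A b W \<and> W \<noteq> {0} \<and>
     (\<forall>W'. common_zero_subspace A b W' \<and> W \<subseteq> W' \<longrightarrow> W' = W)"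

definition real_eigenvalue :: "('a::real_vector \<Rightarrow> 'a) \<Rightarrow> real \<Rightarrow> bool" where
  "real_eigenvalue A c \<longleftrightarrow> (\<exists>v. v \<noteq> 0 \<and> A v = c *\<^sub>R v)"

definition eigenspace :: "('a::real_vector \<Rightarrow> 'a) \<Rightarrow> real \<Rightarrow> 'a set" where
  "eigenspace A c = {v. A v = c *\<^sub>R v}"

definition geom_mult :: "('a::euclidean_space \<Rightarrow> 'a) \<Rightarrow> real \<Rightarrow> nat" where
  "geom_mult A c = dim (eigenspace A c)"

end

theory Submission
  imports Defs "Jordan_Normal_Form.Char_Poly"
begin

text \<open>In coordinates the rotation form is a 2x2 minor,
  \<open>A\<^sup>r\<^sub>k\<^sub>l(u) = (Au)\<^sub>l u\<^sub>k - (Au)\<^sub>k u\<^sub>l\<close>, so all of them vanish at \<open>u\<close> exactly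
  when the coordinate vectors of \<open>Au\<close> and \<open>u\<close> are proportional, i.e. when \<open>u\<close> is an
  eigenvector (or zero). A subspace on which all forms vanish consists of eigenvectors,
  hence lies in a single eigenspace, which is itself such a subspace; so the maximal ones
  are the eigenspaces. In odd dimension the characteristic polynomial has odd degree and
  therefore a real root, giving a common non-zero zero.\<close>

lemma odd_degree_poly_has_root:
  fixes p :: "real poly"
  assumes "odd (degree p)"
  obtains x where "poly p x = 0"
proof -
  let ?n = "degree p" and ?c = "lead_coeff p"
  have "?c \<noteq> 0" using assms by auto
  have "((\<lambda>x. ?c * (poly p x / x ^ ?n)) \<longlongrightarrow> ?c * ?c) at_infinity"
    by (intro tendsto_mult_left poly_divide_tendsto_aux)
  moreover have "?c * ?c > 0" using \<open>?c \<noteq> 0\<close> by (metis not_real_square_gt_zero)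
  ultimately have "\<forall>\<^sub>F x in at_infinity. ?c * (poly p x / x ^ ?n) > 0"
    by (rule order_tendstoD)
  then obtain B where B: "\<And>x. B \<le> norm x \<Longrightarrow> ?c * (poly p x / x ^ ?n) > 0"
    by (auto simp: eventually_at_infinity)
  define x where "x = max B 1"
  have x: "x > 0" "B \<le> norm x" "B \<le> norm (-x)" by (auto simp: x_def)
  have "?c * poly p x > 0"
    using B[OF x(2)] x(1) by (simp add: zero_less_mult_iff zero_less_divide_iff)
  moreover have "?c * poly p (-x) < 0"
  proof -
    have "(-x) ^ ?n < 0" using x(1) assms by (simp add: power_minus_odd)
    moreover have "0 < ?c * poly p (-x) / (-x) ^ ?n"
      using B[OF x(3)] by (simp only: times_divide_eq_right)
    ultimately show ?thesis by (meson zero_less_divide_iff less_asym)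
  qed
  ultimately obtain t where "?c * poly p t = 0"
    using IVT[of "\<lambda>t. ?c * poly p t" "-x" 0 x] x(1) by force
  with \<open>?c \<noteq> 0\<close> that show thesis by simp
qed

lemma orthonormal_basisD:
  "orthonormal_basis b \<Longrightarrow> i < DIM('a) \<Longrightarrow> j < DIM('a) \<Longrightarrow>
    b i \<bullet> b j = (if i = j then 1 else (0::real))"
  for b :: "nat \<Rightarrow> 'a::euclidean_space"
  unfolding orthonormal_basis_def by blast

lemma ex_orthonormal_basis:
  obtains b :: "nat \<Rightarrow> 'a::euclidean_space" where "orthonormal_basis b"
proof -
  obtain b :: "nat \<Rightarrow> 'a" where b: "bij_betw b {..<DIM('a)} Basis"
    using ex_bij_betw_nat_finite[of "Basis :: 'a set"] by (auto simp: atLeast0LessThan)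
  have "b i \<bullet> b j = (if i = j then 1 else 0)" if "i < DIM('a)" "j < DIM('a)" for i j
  proof -
    have "b i \<in> Basis" "b j \<in> Basis" "b i = b j \<longleftrightarrow> i = j"
      using b that by (auto simp: bij_betw_def inj_on_def)
    then show ?thesis by (simp add: inner_Basis)
  qed
  then have "orthonormal_basis b" by (simp add: orthonormal_basis_def)
  then show thesis by (rule that)
qed

lemma orthonormal_basis_eq_0:
  fixes b :: "nat \<Rightarrow> 'a::euclidean_space"
  assumes ob: "orthonormal_basis b" and w: "\<And>i. i < DIM('a) \<Longrightarrow> w \<bullet> b i = 0"
  shows "w = 0"
proof -
  define B where "B = b ` {..<DIM('a)}"
  note bb = orthonormal_basisD[OF ob]
  have "inj_on b {..<DIM('a)}"
    by (rule inj_onI) (metis bb lessThan_iff zero_neq_one)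
  then have card: "card B = DIM('a)" by (simp add: B_def card_image)
  have "pairwise real_inner_class.orthogonal B" "0 \<notin> B"
    unfolding pairwise_def B_def real_inner_class.orthogonal_def using bb by fastforce+
  then have "independent B" by (rule pairwise_orthogonal_independent)
  then have "w \<in> span B"
    using card_ge_dim_independent[of B UNIV] card by auto
  moreover have "real_inner_class.orthogonal w y" if "y \<in> B" for y
    using that w unfolding B_def real_inner_class.orthogonal_def by auto
  ultimately have "real_inner_class.orthogonal w w" by (rule orthogonal_to_span)
  then show ?thesis by (simp add: real_inner_class.orthogonal_def)
qed

lemma inner_orthonormal_basis_sum:
  fixes b :: "nat \<Rightarrow> 'a::euclidean_space"
  assumes "orthonormal_basis b" "i < DIM('a)"
  shows "(\<Sum>j<DIM('a). x j *\<^sub>R b j) \<bullet> b i = x i"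
proof -
  have "(\<Sum>j<DIM('a). x j *\<^sub>R b j) \<bullet> b i = (\<Sum>j<DIM('a). if j = i then x j else 0)"
    unfolding inner_sum_left by (intro sum.cong) (use orthonormal_basisD[OF assms(1)] assms(2) in auto)
  then show ?thesis using assms(2) by simp
qed

lemma odd_dim_ex_real_eigenvector:
  fixes A :: "'a::euclidean_space \<Rightarrow> 'a"
  assumes lin: "linear A" and odd: "odd DIM('a)"
  obtains u c where "u \<noteq> 0" "A u = c *\<^sub>R u"
proof -
  obtain b :: "nat \<Rightarrow> 'a" where ob: "orthonormal_basis b" by (rule ex_orthonormal_basis)
  define n where "n = DIM('a)"
  define M :: "real Matrix.mat" where "M = Matrix.mat n n (\<lambda>(i, j). A (b j) \<bullet> b i)"
  have M: "M \<in> carrier_mat n n" by (simp add: M_def)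
  have "odd (degree (char_poly M))" using degree_monic_char_poly[OF M] odd by (simp add: n_def)
  then obtain c where "poly (char_poly M) c = 0" by (rule odd_degree_poly_has_root)
  then have "eigenvalue M c" using eigenvalue_root_char_poly[OF M] by simp
  then obtain v where v: "v \<in> carrier_vec n" "v \<noteq> 0\<^sub>v n" "M *\<^sub>v v = c \<cdot>\<^sub>v v"
    unfolding eigenvalue_def eigenvector_def using M by auto
  define u where "u = (\<Sum>j<n. v $ j *\<^sub>R b j)"
  have u: "u \<bullet> b i = v $ i" if "i < n" for i
    using inner_orthonormal_basis_sum[OF ob] that by (simp add: u_def n_def)
  have Au: "A u \<bullet> b i = c * v $ i" if "i < n" for i
  proof -
    have "A u \<bullet> b i = (\<Sum>j<n. v $ j * (A (b j) \<bullet> b i))"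
      by (simp add: u_def linear_sum[OF lin] linear_scale[OF lin] inner_sum_left)
    also have "\<dots> = (M *\<^sub>v v) $ i"
      using that v(1) by (simp add: M_def scalar_prod_def mult.commute atLeast0LessThan)
    finally show ?thesis using v(1,3) that by simp
  qed
  have "A u - c *\<^sub>R u = 0"
    by (rule orthonormal_basis_eq_0[OF ob]) (simp add: inner_diff_left Au u n_def)
  moreover have "u \<noteq> 0"
  proof
    assume "u = 0"
    then have "v = 0\<^sub>v n" using u v(1) by (intro eq_vecI) auto
    with v(2) show False ..
  qed
  ultimately show thesis using that by simp
qed

lemma rotation_form_eq:
  "rotation_form A b k l u = (A u \<bullet> b l) * (u \<bullet> b k) - (A u \<bullet> b k) * (u \<bullet> b l)"
  by (simp add: rotation_form_def rot_def inner_diff_right)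

lemma rotation_forms_vanish_iff_eigenvector:
  fixes A :: "'a::euclidean_space \<Rightarrow> 'a" and b :: "nat \<Rightarrow> 'a"
  assumes lin: "linear A" and ob: "orthonormal_basis b"
  shows "(\<forall>k l. k < l \<and> l < DIM('a) \<longrightarrow> rotation_form A b k l u = 0) \<longleftrightarrow> (\<exists>c. A u = c *\<^sub>R u)"
proof
  assume "\<exists>c. A u = c *\<^sub>R u"
  then show "\<forall>k l. k < l \<and> l < DIM('a) \<longrightarrow> rotation_form A b k l u = 0"
    by (auto simp: rotation_form_eq)
next
  assume vanish: "\<forall>k l. k < l \<and> l < DIM('a) \<longrightarrow> rotation_form A b k l u = 0"
  have minor: "(A u \<bullet> b i) * (u \<bullet> b m) = (A u \<bullet> b m) * (u \<bullet> b i)"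
    if "i < DIM('a)" "m < DIM('a)" for i m
    using vanish[rule_format, of i m] vanish[rule_format, of m i] that
    by (cases i m rule: linorder_cases) (auto simp: rotation_form_eq)
  show "\<exists>c. A u = c *\<^sub>R u"
  proof (cases "u = 0")
    case True
    then show ?thesis using linear_0[OF lin] by auto
  next
    case False
    then obtain m where m: "m < DIM('a)" "u \<bullet> b m \<noteq> 0"
      using orthonormal_basis_eq_0[OF ob, of u] by blast
    have "A u - ((A u \<bullet> b m) / (u \<bullet> b m)) *\<^sub>R u = 0"
      using minor m by (intro orthonormal_basis_eq_0[OF ob]) (simp add: inner_diff_left field_simps)
    then show ?thesis by auto
  qed
qed

lemma common_zero_subspace_iff:
  fixes A :: "'a::euclidean_space \<Rightarrow> 'a" and b :: "nat \<Rightarrow> 'a"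
  assumes "linear A" and "orthonormal_basis b"
  shows "common_zero_subspace A b W \<longleftrightarrow> subspace W \<and> (\<forall>u\<in>W. \<exists>c. A u = c *\<^sub>R u)"
  using rotation_forms_vanish_iff_eigenvector[OF assms]
  unfolding common_zero_subspace_def by blast

lemma subspace_eigenspace: "linear A \<Longrightarrow> subspace (eigenspace A c)"
  unfolding subspace_def eigenspace_def
  by (simp add: linear_0 linear_add linear_scale algebra_simps)

text \<open>If \<open>A w = c w\<close> and \<open>A v = d v\<close> with \<open>d \<noteq> c\<close>, then \<open>v + w\<close> is an eigenvector
  only when \<open>v\<close> and \<open>w\<close> are dependent, forcing \<open>d = c\<close> after all.\<close>

lemma eigenvector_subspace_subset_eigenspace:
  fixes A :: "'a::real_vector \<Rightarrow> 'a"
  assumes lin: "linear A" and W: "subspace W" and eig: "\<forall>u\<in>W. \<exists>c. A u = c *\<^sub>R u"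
    and w: "w \<in> W" "w \<noteq> 0" "A w = c *\<^sub>R w"
  shows "W \<subseteq> eigenspace A c"
proof
  fix v assume v: "v \<in> W"
  obtain d where d: "A v = d *\<^sub>R v" using eig v by blast
  obtain e where "A (v + w) = e *\<^sub>R (v + w)" using eig v w W by (meson subspace_add)
  then have eq: "(d - e) *\<^sub>R v = (e - c) *\<^sub>R w"
    using d w(3) by (simp add: linear_add[OF lin] algebra_simps)
  have "A v = c *\<^sub>R v"
  proof (cases "d = e")
    case True
    then show ?thesis using eq w(2) d by simp
  next
    case False
    then have "v = ((e - c) / (d - e)) *\<^sub>R w"
      using eq by (simp add: eq_vector_fraction_iff)
    then show ?thesis using w(3) by (simp add: linear_scale[OF lin])
  qed
  then show "v \<in> eigenspace A c" by (simp add: eigenspace_def)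
qed

lemma maximal_common_zero_subspace_iff_eigenspace:
  fixes A :: "'a::euclidean_space \<Rightarrow> 'a" and b :: "nat \<Rightarrow> 'a"
  assumes lin: "linear A" and ob: "orthonormal_basis b"
  shows "maximal_common_zero_subspace A b W \<longleftrightarrow> (\<exists>c. real_eigenvalue A c \<and> W = eigenspace A c)"
proof
  assume max: "maximal_common_zero_subspace A b W"
  then have W: "subspace W" "\<forall>u\<in>W. \<exists>c. A u = c *\<^sub>R u" "W \<noteq> {0}"
    by (auto simp: maximal_common_zero_subspace_def common_zero_subspace_iff[OF lin ob])
  then obtain w c where w: "w \<in> W" "w \<noteq> 0" "A w = c *\<^sub>R w"
    using subspace_0 by blast
  have "W \<subseteq> eigenspace A c" by (rule eigenvector_subspace_subset_eigenspace[OF lin W(1,2) w])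
  then have "eigenspace A c = W"
    using max subspace_eigenspace[OF lin]
    by (auto simp: maximal_common_zero_subspace_def common_zero_subspace_iff[OF lin ob] eigenspace_def)
  moreover have "real_eigenvalue A c" using w(2,3) by (auto simp: real_eigenvalue_def)
  ultimately show "\<exists>c. real_eigenvalue A c \<and> W = eigenspace A c" by blast
next
  assume "\<exists>c. real_eigenvalue A c \<and> W = eigenspace A c"
  then obtain c w where W: "W = eigenspace A c" and w: "w \<noteq> 0" "A w = c *\<^sub>R w"
    unfolding real_eigenvalue_def by blast
  have "W' = W" if W': "common_zero_subspace A b W'" "W \<subseteq> W'" for W'
  proof -
    have "w \<in> W'" using W w W'(2) by (auto simp: eigenspace_def)
    with W' have "W' \<subseteq> eigenspace A c"
      using w by (intro eigenvector_subspace_subset_eigenspace[OF lin])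
        (auto simp: common_zero_subspace_iff[OF lin ob])
    then show ?thesis using W'(2) W by blast
  qed
  moreover have "W \<noteq> {0}" using W w by (auto simp: eigenspace_def)
  ultimately show "maximal_common_zero_subspace A b W"
    using W subspace_eigenspace[OF lin]
    by (auto simp: maximal_common_zero_subspace_def common_zero_subspace_iff[OF lin ob] eigenspace_def)
qed

theorem corollary2p9:
  fixes A :: "'a::euclidean_space \<Rightarrow> 'a" and b :: "nat \<Rightarrow> 'a"
  assumes "linear A" and "A \<noteq> (\<lambda>x. 0)" and "orthonormal_basis b"
  shows "(odd DIM('a) \<longrightarrow>
            (\<exists>u. u \<noteq> 0 \<and> (\<forall>k l. k < l \<and> l < DIM('a) \<longrightarrow> rotation_form A b k l u = 0)))
       \<and> (\<forall>W. maximal_common_zero_subspace A b W \<longleftrightarrow>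
                (\<exists>c. real_eigenvalue A c \<and> W = eigenspace A c))
       \<and> (\<forall>W c. maximal_common_zero_subspace A b W \<and> real_eigenvalue A c \<and> W = eigenspace A c
                \<longrightarrow> dim W = geom_mult A c)"
proof (intro conjI allI impI)
  assume "odd DIM('a)"
  then obtain u c where "u \<noteq> 0" "A u = c *\<^sub>R u"
    using odd_dim_ex_real_eigenvector[OF assms(1)] by blast
  then show "\<exists>u. u \<noteq> 0 \<and> (\<forall>k l. k < l \<and> l < DIM('a) \<longrightarrow> rotation_form A b k l u = 0)"
    using rotation_forms_vanish_iff_eigenvector[OF assms(1,3)] by blast
next
  fix W
  show "maximal_common_zero_subspace A b W \<longleftrightarrow> (\<exists>c. real_eigenvalue A c \<and> W = eigenspace A c)"
    by (rule maximal_common_zero_subspace_iff_eigenspace[OF assms(1,3)])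
next
  fix W c
  assume "maximal_common_zero_subspace A b W \<and> real_eigenvalue A c \<and> W = eigenspace A c"
  then show "dim W = geom_mult A c" by (simp add: geom_mult_def)
qed

end
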